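(* There is a universal constant $c>0$ such that the following holds. Let $\mathbf x\sim\mathcal N(0,I_p)$, $\mathbf u\in\mathbb R^p$, $b,v\in\mathbb R$, and $\mathbf a=b\,\mathbb I(|b+\langle\mathbf x,\mathbf u\rangle|<v)\,\mathbf x$. Then for every $\mathbf t\in\mathbb R^p$, $$\mathbb E\big[e^{\langle\mathbf t,\mathbf a-\mathbb E[\mathbf a]\rangle}\big]\le e^{c\,b^2\|\mathbf t\|^2/2}.$$
   Context: $\mathbb I(\cdot)$ is the indicator function; $\|\cdot\|$ is the Euclidean norm. *)

theory Defs
  imports "HOL-Probability.Probability"
begin

text \<open>Vectors in R^p are represented as functions nat => real, of which only the
coordinates i < p matter.\<close>

definition std_gauss :: "nat \<Rightarrow> (nat \<Rightarrow> real) measure" where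
  "std_gauss p = PiM {..<p} (\<lambda>_. density lborel std_normal_density)"

definition ip :: "nat \<Rightarrow> (nat \<Rightarrow> real) \<Rightarrow> (nat \<Rightarrow> real) \<Rightarrow> real" where
  "ip p x y = (\<Sum>i<p. x i * y i)"

definition sqnorm :: "nat \<Rightarrow> (nat \<Rightarrow> real) \<Rightarrow> real" where
  "sqnorm p x = (\<Sum>i<p. (x i)\<^sup>2)"

definition avec :: "nat \<Rightarrow> (nat \<Rightarrow> real) \<Rightarrow> real \<Rightarrow> real \<Rightarrow> (nat \<Rightarrow> real) \<Rightarrow> nat \<Rightarrow> real" where
  "avec p u b v x i = b * (if \<bar>b + ip p x u\<bar> < v then 1 else 0) * x i"

end

theory Submission
  imports Defs
begin

text \<open>
  Put \<open>Z = b \<langle>t, x\<rangle>\<close>, a centred Gaussian of variance \<open>S = b\<^sup>2 \<parallel>t\<parallel>\<^sup>2\<close>, and let \<open>L\<close> be the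
  indicator, so that \<open>\<langle>t, a - E a\<rangle> = L Z - \<mu>\<close> with \<open>\<mu> = E (L Z)\<close>. Convexity of \<open>exp\<close>
  gives \<open>exp (L Z) \<le> L Z + exp Z - Z\<close>, hence \<open>E exp (L Z) \<le> \<mu> + exp (S/2)\<close>; and
  \<open>- \<mu> \<le> E \<bar>Z\<bar> \<le> 4 \<surd>S\<close>. An elementary estimate then bounds
  \<open>exp (- \<mu>) (\<mu> + exp (S/2))\<close> by \<open>exp (100 S)\<close>. The argument only uses the moment
  generating function of \<open>Z\<close> and \<open>0 \<le> L \<le> 1\<close>, so it shows more generally that
  \<open>L Z - E (L Z)\<close> is sub-Gaussian with variance proxy \<open>200 S\<close> whenever \<open>Z\<close> is centred
  sub-Gaussian with proxy \<open>S\<close>.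
\<close>

section \<open>Elementary inequalities\<close>

lemma abs_le_exp_plus_exp_minus: "\<bar>z::real\<bar> \<le> exp z + exp (-z)"
proof -
  have "\<bar>z\<bar> \<le> exp \<bar>z\<bar>" using exp_ge_add_one_self[of "\<bar>z\<bar>"] by linarith
  moreover have "exp \<bar>z\<bar> \<le> exp z + exp (-z)"
    using exp_gt_zero[of z] exp_gt_zero[of "-z"] by (cases "z \<ge> 0") auto
  ultimately show ?thesis by linarith
qed

text \<open>Convexity of \<open>exp\<close> on the segment from \<open>0\<close> to \<open>z\<close>.\<close>
lemma exp_mult_le:
  fixes l z :: real
  assumes "0 \<le> l" "l \<le> 1"
  shows "exp (l * z) \<le> l * z + exp z - z"
proof -
  have "exp (l * z) \<le> (1 - l) * exp 0 + l * exp z"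
    using convex_onD[OF exp_convex, of l 0 z] assms by simp
  also have "\<dots> \<le> l * z + exp z - z"
    using mult_left_mono[OF exp_ge_add_one_self[of z], of "1 - l"] assms
    by (simp add: algebra_simps)
  finally show ?thesis .
qed

lemma one_plus_exp_sqrt_le_exp:
  fixes S :: real
  assumes S: "S \<ge> 0"
  shows "1 + exp (4 * sqrt S) * (exp (S/2) - 1) \<le> exp (100 * S)"
proof (cases "S \<le> 1")
  case True
  have "exp (4 * sqrt S) \<le> exp 4" using True S by simp
  also have "exp (4::real) = exp 1 ^ 4" using exp_of_nat_mult[of 4 "1::real"] by simp
  also have "\<dots> \<le> 3 ^ 4" by (intro power_mono exp_le) auto
  finally have a: "exp (4 * sqrt S) \<le> 81" by simp
  have "(1 - S/2) * exp (S/2) \<le> 1"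
    using exp_ge_add_one_self[of "-(S/2)"] by (simp add: exp_minus field_simps)
  also have "1 \<le> (1 - S/2) * (1 + S)"
    using mult_left_mono[OF True S] by (simp add: algebra_simps)
  finally have b: "exp (S/2) - 1 \<le> S"
    using True by (simp add: mult_le_cancel_left_pos)
  have "1 + exp (4 * sqrt S) * (exp (S/2) - 1) \<le> 1 + 81 * S"
    using mult_mono[OF a b] S by simp
  also have "\<dots> \<le> exp (100 * S)" using exp_ge_add_one_self[of "100 * S"] S by linarith
  finally show ?thesis .
next
  case False
  then have "sqrt S * 1 \<le> sqrt S * sqrt S" by (intro mult_left_mono) auto
  then have "sqrt S \<le> S" using S by simp
  then have "exp (4 * sqrt S) * (exp (S/2) - 1) \<le> exp (4 * S) * exp (S/2)"
    using S by (intro mult_mono) auto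
  also have "\<dots> = exp (9/2 * S)" by (simp flip: exp_add)
  finally have a: "exp (4 * sqrt S) * (exp (S/2) - 1) \<le> exp (9/2 * S)" .
  have "1 \<le> exp (9/2 * S)" using S by simp
  with a have "1 + exp (4 * sqrt S) * (exp (S/2) - 1) \<le> 2 * exp (9/2 * S)"
    by linarith
  also have "\<dots> \<le> exp S * exp (9/2 * S)"
  proof (rule mult_right_mono)
    show "2 \<le> exp S" using exp_ge_add_one_self[of S] False by linarith
  qed simp
  also have "\<dots> \<le> exp (100 * S)" using S by (simp flip: exp_add)
  finally show ?thesis .
qed

lemma exp_neg_mult_le_exp:
  fixes S \<mu> :: real
  assumes S: "S \<ge> 0" and \<mu>: "- \<mu> \<le> 4 * sqrt S"
  shows "exp (- \<mu>) * (\<mu> + exp (S/2)) \<le> exp (100 * S)"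
proof -
  have "exp (- \<mu>) * (1 + \<mu>) \<le> exp (- \<mu>) * exp \<mu>"
    using exp_ge_add_one_self[of \<mu>] by (intro mult_left_mono) auto
  moreover have "exp (- \<mu>) * (exp (S/2) - 1) \<le> exp (4 * sqrt S) * (exp (S/2) - 1)"
    using \<mu> S by (intro mult_right_mono) auto
  ultimately have "exp (- \<mu>) * (\<mu> + exp (S/2)) \<le> 1 + exp (4 * sqrt S) * (exp (S/2) - 1)"
    by (simp add: algebra_simps exp_minus)
  also have "\<dots> \<le> exp (100 * S)" by (rule one_plus_exp_sqrt_le_exp[OF S])
  finally show ?thesis .
qed

section \<open>Sub-Gaussian random variables\<close>

definition subgaussian :: "'a measure \<Rightarrow> ('a \<Rightarrow> real) \<Rightarrow> real \<Rightarrow> bool" where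
  "subgaussian M Z \<sigma>2 \<longleftrightarrow>
     (\<forall>c. integrable M (\<lambda>x. exp (c * Z x)) \<and> (\<integral>x. exp (c * Z x) \<partial>M) \<le> exp (c\<^sup>2 * \<sigma>2 / 2))"

lemma subgaussian_integrable_exp:
  "subgaussian M Z \<sigma>2 \<Longrightarrow> integrable M (\<lambda>x. exp (c * Z x))"
  by (simp add: subgaussian_def)

lemma subgaussian_integral_exp_le:
  "subgaussian M Z \<sigma>2 \<Longrightarrow> (\<integral>x. exp (c * Z x) \<partial>M) \<le> exp (c\<^sup>2 * \<sigma>2 / 2)"
  by (simp add: subgaussian_def)

lemma subgaussian_scale:
  assumes "subgaussian M Z \<sigma>2"
  shows "subgaussian M (\<lambda>x. a * Z x) (a\<^sup>2 * \<sigma>2)"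
  unfolding subgaussian_def
proof
  fix c
  show "integrable M (\<lambda>x. exp (c * (a * Z x))) \<and>
        (\<integral>x. exp (c * (a * Z x)) \<partial>M) \<le> exp (c\<^sup>2 * (a\<^sup>2 * \<sigma>2) / 2)"
    using assms[unfolded subgaussian_def, rule_format, of "c * a"]
    by (simp add: mult.assoc power_mult_distrib)
qed

lemma subgaussian_measurable:
  assumes "subgaussian M Z \<sigma>2"
  shows "Z \<in> borel_measurable M"
proof -
  have "(\<lambda>x. exp (1 * Z x)) \<in> borel_measurable M"
    using subgaussian_integrable_exp[OF assms] by blast
  then have "(\<lambda>x. ln (exp (1 * Z x))) \<in> borel_measurable M"
    by measurable
  then show ?thesis by simp
qed

lemma subgaussian_nn_integral_exp_le:
  assumes "subgaussian M Z \<sigma>2"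
  shows "(\<integral>\<^sup>+x. ennreal (exp (Z x)) \<partial>M) \<le> ennreal (exp (\<sigma>2 / 2))"
proof -
  have "(\<integral>\<^sup>+x. ennreal (exp (Z x)) \<partial>M) = ennreal (\<integral>x. exp (1 * Z x) \<partial>M)"
    using subgaussian_integrable_exp[OF assms, of 1] by (simp add: nn_integral_eq_integral)
  also have "\<dots> \<le> ennreal (exp (\<sigma>2 / 2))"
    using subgaussian_integral_exp_le[OF assms, of 1] by (simp add: ennreal_leI)
  finally show ?thesis .
qed

lemma (in prob_space) subgaussian_integrable:
  assumes "subgaussian M Z \<sigma>2"
  shows "integrable M Z"
proof (rule Bochner_Integration.integrable_bound)
  show "integrable M (\<lambda>x. exp (1 * Z x) + exp (-1 * Z x))"
    using subgaussian_integrable_exp[OF assms, of 1] subgaussian_integrable_exp[OF assms, of "-1"]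
    by (intro Bochner_Integration.integrable_add)
  show "Z \<in> borel_measurable M" using subgaussian_measurable[OF assms] .
  show "AE x in M. norm (Z x) \<le> norm (exp (1 * Z x) + exp (-1 * Z x))"
    using abs_le_exp_plus_exp_minus by (auto intro!: AE_I2 simp: add_pos_pos abs_of_pos)
qed

lemma (in prob_space) subgaussian_variance_proxy_nonneg:
  assumes Z: "subgaussian M Z \<sigma>2" and mean: "expectation Z = 0"
  shows "\<sigma>2 \<ge> 0"
proof -
  have "1 = expectation (\<lambda>x. 1 + Z x)"
    using subgaussian_integrable[OF Z] mean by (simp add: prob_space)
  also have "\<dots> \<le> expectation (\<lambda>x. exp (1 * Z x))"
    using subgaussian_integrable[OF Z] subgaussian_integrable_exp[OF Z, of 1]
    by (intro integral_mono) (auto simp: exp_ge_add_one_self)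
  also have "\<dots> \<le> exp (\<sigma>2 / 2)"
    using subgaussian_integral_exp_le[OF Z, of 1] by simp
  finally show ?thesis by simp
qed

text \<open>Integrate \<open>\<bar>z\<bar> \<le> (exp (c * z) + exp (- c * z)) / c\<close>.\<close>
lemma (in prob_space) subgaussian_expectation_abs_le:
  assumes Z: "subgaussian M Z \<sigma>2" and c: "c > 0"
  shows "expectation (\<lambda>x. \<bar>Z x\<bar>) \<le> 2 * exp (c\<^sup>2 * \<sigma>2 / 2) / c"
proof -
  have "\<bar>Z x\<bar> = \<bar>c * Z x\<bar> / c" for x using c by (simp add: abs_mult)
  then have bound: "\<bar>Z x\<bar> \<le> (exp (c * Z x) + exp (- c * Z x)) / c" for x
    using c abs_le_exp_plus_exp_minus[of "c * Z x"] by (simp add: divide_right_mono)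
  have "expectation (\<lambda>x. \<bar>Z x\<bar>) \<le> expectation (\<lambda>x. (exp (c * Z x) + exp (- c * Z x)) / c)"
    using subgaussian_integrable[OF Z] subgaussian_integrable_exp[OF Z, of c]
      subgaussian_integrable_exp[OF Z, of "-c"]
    by (intro integral_mono bound) auto
  also have "\<dots> = (expectation (\<lambda>x. exp (c * Z x)) + expectation (\<lambda>x. exp (- c * Z x))) / c"
    using subgaussian_integrable_exp[OF Z, of c] subgaussian_integrable_exp[OF Z, of "-c"] by simp
  also have "\<dots> \<le> (exp (c\<^sup>2 * \<sigma>2 / 2) + exp ((- c)\<^sup>2 * \<sigma>2 / 2)) / c"
    using c subgaussian_integral_exp_le[OF Z, of c] subgaussian_integral_exp_le[OF Z, of "-c"]
    by (intro divide_right_mono add_mono) auto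
  finally show ?thesis by simp
qed

lemma (in prob_space) subgaussian_expectation_abs_le_sqrt:
  assumes Z: "subgaussian M Z \<sigma>2" and nonneg: "\<sigma>2 \<ge> 0"
  shows "expectation (\<lambda>x. \<bar>Z x\<bar>) \<le> 4 * sqrt \<sigma>2"
proof (cases "\<sigma>2 = 0")
  case True
  have le: "expectation (\<lambda>x. \<bar>Z x\<bar>) \<le> 2 / c" if "c > 0" for c
    using subgaussian_expectation_abs_le[OF Z that] True by simp
  show ?thesis
  proof (rule ccontr)
    assume "\<not> ?thesis"
    then have pos: "expectation (\<lambda>x. \<bar>Z x\<bar>) > 0" using True by simp
    with le[of "4 / expectation (\<lambda>x. \<bar>Z x\<bar>)"] show False by simp
  qed
next
  case False
  then have s: "sqrt \<sigma>2 > 0" using nonneg by simp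
  have "(1 / sqrt \<sigma>2)\<^sup>2 * \<sigma>2 / 2 = 1/2"
    using s nonneg by (simp add: power_divide)
  then have "expectation (\<lambda>x. \<bar>Z x\<bar>) \<le> 2 * exp (1/2) * sqrt \<sigma>2"
    using subgaussian_expectation_abs_le[OF Z, of "1 / sqrt \<sigma>2"] s by simp
  also have "\<dots> \<le> 2 * 2 * sqrt \<sigma>2"
    using exp_ge_add_one_self[of "-(1/2::real)"] s
    by (intro mult_right_mono mult_left_mono) (auto simp: exp_minus field_simps)
  finally show ?thesis by simp
qed

lemma (in prob_space) subgaussian_mult_bounded_mgf_le:
  assumes Z: "subgaussian M Z \<sigma>2" and mean: "expectation Z = 0"
    and L: "L \<in> borel_measurable M" "\<And>x. 0 \<le> L x" "\<And>x. L x \<le> 1"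
  defines "\<mu> \<equiv> expectation (\<lambda>x. L x * Z x)"
  shows "integrable M (\<lambda>x. exp (L x * Z x - \<mu>))"
    and "expectation (\<lambda>x. exp (L x * Z x - \<mu>)) \<le> exp (100 * \<sigma>2)"
proof -
  have int_Z: "integrable M Z" by (rule subgaussian_integrable[OF Z])
  have int_expZ: "integrable M (\<lambda>x. exp (Z x))"
    using subgaussian_integrable_exp[OF Z, of 1] by simp
  have Z_meas[measurable]: "Z \<in> borel_measurable M" by (rule subgaussian_measurable[OF Z])
  note L_meas[measurable] = L(1)
  have int_LZ: "integrable M (\<lambda>x. L x * Z x)"
    using L by (intro Bochner_Integration.integrable_bound[OF int_Z]) (auto simp: abs_mult mult_left_le_one_le)
  have exp_LZ_le: "exp (L x * Z x) \<le> L x * Z x + exp (Z x) - Z x" for x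
    using exp_mult_le[OF L(2,3)] .
  have int_exp_LZ: "integrable M (\<lambda>x. exp (L x * Z x))"
  proof (rule Bochner_Integration.integrable_bound)
    show "integrable M (\<lambda>x. L x * Z x + exp (Z x) - Z x)"
      using int_LZ int_expZ int_Z by auto
    show "AE x in M. norm (exp (L x * Z x)) \<le> norm (L x * Z x + exp (Z x) - Z x)"
      using exp_LZ_le by (auto intro!: AE_I2 intro: order_trans[OF _ abs_ge_self])
  qed measurable
  have "expectation (\<lambda>x. exp (L x * Z x)) \<le> expectation (\<lambda>x. L x * Z x + exp (Z x) - Z x)"
    using int_exp_LZ int_LZ int_expZ int_Z exp_LZ_le by (intro integral_mono) auto
  also have "\<dots> = \<mu> + expectation (\<lambda>x. exp (Z x))"
    using int_LZ int_expZ int_Z mean by (simp add: \<mu>_def)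
  also have "\<dots> \<le> \<mu> + exp (\<sigma>2 / 2)"
    using subgaussian_integral_exp_le[OF Z, of 1] by simp
  finally have exp_LZ_int_le: "expectation (\<lambda>x. exp (L x * Z x)) \<le> \<mu> + exp (\<sigma>2 / 2)" .
  have "\<bar>L x * Z x\<bar> \<le> \<bar>Z x\<bar>" for x
    using L by (simp add: abs_mult mult_left_le_one_le)
  then have "expectation (\<lambda>x. - (L x * Z x)) \<le> expectation (\<lambda>x. \<bar>Z x\<bar>)"
    using int_LZ int_Z by (intro integral_mono) (auto simp: abs_le_iff)
  then have "- \<mu> \<le> expectation (\<lambda>x. \<bar>Z x\<bar>)"
    by (simp add: \<mu>_def)
  also have "\<dots> \<le> 4 * sqrt \<sigma>2"
    by (rule subgaussian_expectation_abs_le_sqrt[OF Z subgaussian_variance_proxy_nonneg[OF Z mean]])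
  finally have neg_\<mu>_le: "- \<mu> \<le> 4 * sqrt \<sigma>2" .
  have shift: "exp (L x * Z x - \<mu>) = exp (- \<mu>) * exp (L x * Z x)" for x
    by (simp flip: exp_add)
  show "integrable M (\<lambda>x. exp (L x * Z x - \<mu>))"
    unfolding shift using int_exp_LZ by simp
  have "expectation (\<lambda>x. exp (L x * Z x - \<mu>)) = exp (- \<mu>) * expectation (\<lambda>x. exp (L x * Z x))"
    unfolding shift by simp
  also have "\<dots> \<le> exp (- \<mu>) * (\<mu> + exp (\<sigma>2 / 2))"
    using exp_LZ_int_le by simp
  also have "\<dots> \<le> exp (100 * \<sigma>2)"
    by (rule exp_neg_mult_le_exp[OF subgaussian_variance_proxy_nonneg[OF Z mean] neg_\<mu>_le])
  finally show "expectation (\<lambda>x. exp (L x * Z x - \<mu>)) \<le> exp (100 * \<sigma>2)" .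
qed

theorem (in prob_space) subgaussian_mult_bounded_centered:
  assumes Z: "subgaussian M Z \<sigma>2" and mean: "expectation Z = 0"
    and L: "L \<in> borel_measurable M" "\<And>x. 0 \<le> L x" "\<And>x. L x \<le> 1"
  shows "subgaussian M (\<lambda>x. L x * Z x - expectation (\<lambda>y. L y * Z y)) (200 * \<sigma>2)"
  unfolding subgaussian_def
proof
  fix c :: real
  define \<mu> where "\<mu> = expectation (\<lambda>y. L y * Z y)"
  have cZ: "subgaussian M (\<lambda>x. c * Z x) (c\<^sup>2 * \<sigma>2)" by (rule subgaussian_scale[OF Z])
  have cZ_mean: "expectation (\<lambda>x. c * Z x) = 0" using mean by simp
  have "expectation (\<lambda>y. L y * (c * Z y)) = c * \<mu>"
    by (simp add: \<mu>_def mult.left_commute)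
  then have eq: "c * (L x * Z x - \<mu>) = L x * (c * Z x) - expectation (\<lambda>y. L y * (c * Z y))" for x
    by (simp add: algebra_simps)
  show "integrable M (\<lambda>x. exp (c * (L x * Z x - \<mu>))) \<and>
        expectation (\<lambda>x. exp (c * (L x * Z x - \<mu>))) \<le> exp (c\<^sup>2 * (200 * \<sigma>2) / 2)"
    unfolding eq using subgaussian_mult_bounded_mgf_le[OF cZ cZ_mean L] by (simp add: mult.commute)
qed

section \<open>The standard Gaussian measure on \<open>\<real>\<^sup>p\<close>\<close>

lemma std_normal_mgf:
  "(\<integral>\<^sup>+x. ennreal (exp (a * x)) \<partial>std_normal_distribution) = ennreal (exp (a\<^sup>2 / 2))"
proof -
  text \<open>Completing the square.\<close>
  have shift: "std_normal_density x * exp (a * x) = exp (a\<^sup>2 / 2) * std_normal_density (-a + 1 * x)" for x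
  proof -
    have "exp (a * x) * exp (- x\<^sup>2 / 2) = exp (a\<^sup>2 / 2) * exp (- (-a + 1 * x)\<^sup>2 / 2)"
      unfolding mult_exp_exp by (simp add: power2_eq_square algebra_simps add_divide_distrib diff_divide_distrib)
    then show ?thesis unfolding std_normal_density_def by (simp add: algebra_simps)
  qed
  have "(\<integral>\<^sup>+x. ennreal (exp (a * x)) \<partial>std_normal_distribution)
      = (\<integral>\<^sup>+x. ennreal (std_normal_density x * exp (a * x)) \<partial>lborel)"
    by (subst nn_integral_density) (auto simp: ennreal_mult')
  also have "\<dots> = ennreal (exp (a\<^sup>2 / 2)) * (\<integral>\<^sup>+x. ennreal (std_normal_density (-a + 1 * x)) \<partial>lborel)"
    unfolding shift by (subst nn_integral_cmult[symmetric]) (auto simp: ennreal_mult')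
  also have "(\<integral>\<^sup>+x. ennreal (std_normal_density (-a + 1 * x)) \<partial>lborel) = 1"
    using nn_integral_real_affine[of "\<lambda>x. ennreal (std_normal_density x)" 1 "-a"]
    by (simp add: nn_integral_eq_integral)
  finally show ?thesis by simp
qed

interpretation std_normal_product: product_sigma_finite "\<lambda>_::nat. std_normal_distribution"
  by (simp add: product_sigma_finite_def prob_space_imp_sigma_finite prob_space_normal_density)

lemma prob_space_std_gauss: "prob_space (std_gauss p)"
  unfolding std_gauss_def by (auto intro!: prob_space_PiM prob_space_normal_density)

lemma measurable_component_std_gauss:
  "i < p \<Longrightarrow> (\<lambda>x. x i) \<in> std_gauss p \<rightarrow>\<^sub>M std_normal_distribution"
  unfolding std_gauss_def by (intro measurable_component_singleton) simp

lemma borel_measurable_component_std_gauss[measurable]: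
  "i < p \<Longrightarrow> (\<lambda>x. x i) \<in> borel_measurable (std_gauss p)"
  using measurable_component_std_gauss by (simp add: measurable_def)

lemma borel_measurable_ip_std_gauss[measurable]:
  "(\<lambda>x. ip p x w) \<in> borel_measurable (std_gauss p)"
  "(\<lambda>x. ip p w x) \<in> borel_measurable (std_gauss p)"
  unfolding ip_def by measurable

lemma distr_component_std_gauss:
  "i < p \<Longrightarrow> distr (std_gauss p) std_normal_distribution (\<lambda>x. x i) = std_normal_distribution"
  unfolding std_gauss_def by (rule distr_PiM_component) (auto intro: prob_space_normal_density)

lemma integrable_component_std_gauss:
  assumes "i < p"
  shows "integrable (std_gauss p) (\<lambda>x. x i)"
proof -
  have "integrable std_normal_distribution (\<lambda>y. y)"
    by (subst integrable_density) (use integrable_std_normal_moment[of 1] in auto)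
  then have "integrable (distr (std_gauss p) std_normal_distribution (\<lambda>x. x i)) (\<lambda>y. y)"
    by (simp add: distr_component_std_gauss[OF assms])
  then show ?thesis
    using measurable_component_std_gauss[OF assms] by (subst (asm) integrable_distr_eq) auto
qed

lemma expectation_component_std_gauss:
  assumes "i < p"
  shows "(\<integral>x. x i \<partial>std_gauss p) = 0"
proof -
  have "(\<integral>y. y \<partial>std_normal_distribution) = 0"
    by (subst integral_density) (use integral_std_normal_moment_odd[of 0] in auto)
  then have "(\<integral>y. y \<partial>distr (std_gauss p) std_normal_distribution (\<lambda>x. x i)) = 0"
    by (simp add: distr_component_std_gauss[OF assms])
  then show ?thesis
    using measurable_component_std_gauss[OF assms] by (subst (asm) integral_distr) auto
qed

lemma expectation_ip_std_gauss: "(\<integral>x. ip p w x \<partial>std_gauss p) = 0"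
  unfolding ip_def using integrable_component_std_gauss expectation_component_std_gauss by simp

lemma std_gauss_mgf:
  "(\<integral>\<^sup>+x. ennreal (exp (ip p w x)) \<partial>std_gauss p) = ennreal (exp (sqnorm p w / 2))"
proof -
  have "(\<integral>\<^sup>+x. ennreal (exp (ip p w x)) \<partial>std_gauss p)
      = (\<integral>\<^sup>+x. (\<Prod>i<p. ennreal (exp (w i * x i))) \<partial>std_gauss p)"
    by (simp add: ip_def exp_sum prod_ennreal)
  also have "\<dots> = (\<Prod>i<p. \<integral>\<^sup>+y. ennreal (exp (w i * y)) \<partial>std_normal_distribution)"
    unfolding std_gauss_def
    by (rule std_normal_product.product_nn_integral_prod[where f="\<lambda>i y. ennreal (exp (w i * y))"]) auto
  also have "\<dots> = ennreal (exp (sqnorm p w / 2))"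
    by (simp add: std_normal_mgf sqnorm_def sum_divide_distrib exp_sum prod_ennreal)
  finally show ?thesis .
qed

lemma subgaussian_ip_std_gauss: "subgaussian (std_gauss p) (\<lambda>x. ip p w x) (sqnorm p w)"
  unfolding subgaussian_def
proof
  fix c
  have "ip p (\<lambda>i. c * w i) x = c * ip p w x" for x
    by (simp add: ip_def sum_distrib_left mult.assoc)
  moreover have "sqnorm p (\<lambda>i. c * w i) = c\<^sup>2 * sqnorm p w"
    by (simp add: sqnorm_def sum_distrib_left power_mult_distrib)
  ultimately have "has_bochner_integral (std_gauss p) (\<lambda>x. exp (c * ip p w x)) (exp (c\<^sup>2 * sqnorm p w / 2))"
    using std_gauss_mgf[of p "\<lambda>i. c * w i"] by (intro has_bochner_integral_nn_integral) auto
  then show "integrable (std_gauss p) (\<lambda>x. exp (c * ip p w x)) \<and>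
      (\<integral>x. exp (c * ip p w x) \<partial>std_gauss p) \<le> exp (c\<^sup>2 * sqnorm p w / 2)"
    by (simp add: has_bochner_integral_iff)
qed

lemma ip_avec_centered:
  fixes p :: nat and u t x :: "nat \<Rightarrow> real" and b v :: real
  defines "L \<equiv> \<lambda>y. of_bool (\<bar>b + ip p y u\<bar> < v) :: real"
  shows "ip p t (\<lambda>i. avec p u b v x i - (\<integral>y. avec p u b v y i \<partial>std_gauss p))
       = L x * ip p (\<lambda>i. b * t i) x - (\<integral>y. L y * ip p (\<lambda>i. b * t i) y \<partial>std_gauss p)"
proof -
  have avec_eq: "avec p u b v y i = b * (L y * y i)" for y i
    unfolding avec_def L_def by simp
  have int: "integrable (std_gauss p) (\<lambda>y. w i * (L y * y i))" if "i < p" for i w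
    using that unfolding L_def
    by (intro integrable_mult_right Bochner_Integration.integrable_bound[OF integrable_component_std_gauss])
      auto
  have "(\<integral>y. L y * ip p (\<lambda>i. b * t i) y \<partial>std_gauss p)
      = (\<integral>y. (\<Sum>i<p. b * t i * (L y * y i)) \<partial>std_gauss p)"
    by (simp add: ip_def sum_distrib_left mult.left_commute)
  also have "\<dots> = (\<Sum>i<p. b * t i * (\<integral>y. L y * y i \<partial>std_gauss p))"
    using int by (simp add: integral_sum)
  finally have mean: "(\<integral>y. L y * ip p (\<lambda>i. b * t i) y \<partial>std_gauss p)
      = (\<Sum>i<p. b * t i * (\<integral>y. L y * y i \<partial>std_gauss p))" .
  have "ip p t (\<lambda>i. avec p u b v x i - (\<integral>y. avec p u b v y i \<partial>std_gauss p))
      = (\<Sum>i<p. t i * (b * (L x * x i)) - t i * (b * (\<integral>y. L y * y i \<partial>std_gauss p)))"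
    by (simp add: ip_def avec_eq right_diff_distrib)
  also have "\<dots> = L x * ip p (\<lambda>i. b * t i) x - (\<Sum>i<p. b * t i * (\<integral>y. L y * y i \<partial>std_gauss p))"
    by (simp add: ip_def sum_subtractf sum_distrib_left algebra_simps)
  finally show ?thesis unfolding mean .
qed

theorem mainTheorem8:
  shows "\<exists>c>0. \<forall>p::nat. \<forall>(u::nat \<Rightarrow> real) (b::real) (v::real) (t::nat \<Rightarrow> real).
     p \<ge> 1 \<longrightarrow>
     (\<integral>\<^sup>+ x. ennreal (exp (ip p t (\<lambda>i. avec p u b v x i
                 - (\<integral> y. avec p u b v y i \<partial>std_gauss p)))) \<partial>std_gauss p)
       \<le> ennreal (exp (c * b\<^sup>2 * sqnorm p t / 2))"
proof (intro exI[of _ "200::real"] conjI allI impI)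
  fix p :: nat and u t :: "nat \<Rightarrow> real" and b v :: real
  interpret prob_space "std_gauss p" by (rule prob_space_std_gauss)
  define L where "L y = (of_bool (\<bar>b + ip p y u\<bar> < v) :: real)" for y
  define w where "w i = b * t i" for i
  have "subgaussian (std_gauss p)
      (\<lambda>x. L x * ip p w x - expectation (\<lambda>y. L y * ip p w y)) (200 * sqnorm p w)"
    using subgaussian_ip_std_gauss expectation_ip_std_gauss
    by (rule subgaussian_mult_bounded_centered) (auto simp: L_def)
  then have "(\<integral>\<^sup>+x. ennreal (exp (L x * ip p w x - expectation (\<lambda>y. L y * ip p w y))) \<partial>std_gauss p)
      \<le> ennreal (exp (200 * sqnorm p w / 2))"
    by (rule subgaussian_nn_integral_exp_le)
  moreover have "ip p t (\<lambda>i. avec p u b v x i - (\<integral>y. avec p u b v y i \<partial>std_gauss p))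
      = L x * ip p w x - expectation (\<lambda>y. L y * ip p w y)" for x
    unfolding L_def w_def by (rule ip_avec_centered)
  moreover have "sqnorm p w = b\<^sup>2 * sqnorm p t"
    by (simp add: w_def sqnorm_def sum_distrib_left power_mult_distrib)
  ultimately show "(\<integral>\<^sup>+ x. ennreal (exp (ip p t (\<lambda>i. avec p u b v x i
                 - (\<integral> y. avec p u b v y i \<partial>std_gauss p)))) \<partial>std_gauss p)
       \<le> ennreal (exp (200 * b\<^sup>2 * sqnorm p t / 2))"
    by (simp add: mult.assoc)
qed simp

end
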